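(* Let $D=2$, $0<p\le1$, and $\kappa(\theta,\theta')=\varphi(\|\theta-\theta'\|_p^p)$ with $\varphi(x)=\frac1{1+x}$. For $\Delta>0$ let $\mathcal G_\Delta=\{0,\Delta\}\times\{0,\Delta\}\subset\mathbb R^2$. Then there exists $\Delta>0$ such that $\mathcal G_\Delta$ is not axis admissible with respect to $\kappa$.
   Context: $\|\theta\|_p^p=\sum_d|\theta[d]|^p$. A Cartesian grid is $\mathcal G=\prod_{d=1}^D\mathcal S_d$ with $\mathcal S_d\subset\mathbb R$ finite. $\mathcal G=\{\theta_\ell\}_{\ell=1}^{|\mathcal G|}$ is axis admissible w.r.t. $\kappa$ if for every $d\in\{1,\dots,D\}$, every $\theta\in\mathbb R^D$ with $\theta[d]=0$ and every real coefficients $\{c_\ell\}$ such that $f_d(t)=|\sum_\ell c_\ell\kappa(\theta+t\mathbf e_d,\theta_\ell)|$ is not identically zero on $\mathbb R$, one has $\emptyset\ne\arg\max_{t\in\mathbb R}f_d(t)\subseteq\mathcal S_d$ ($\mathbf e_d$ the $d$-th canonical basis vector). *)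

theory Defs
  imports "HOL-Analysis.Analysis"
begin

definition pnorm_pow :: "real \<Rightarrow> real^'n \<Rightarrow> real" where
  "pnorm_pow p \<theta> = (\<Sum>d\<in>UNIV. \<bar>\<theta> $ d\<bar> powr p)"

definition cart_grid :: "('n \<Rightarrow> real set) \<Rightarrow> (real^'n) set" where
  "cart_grid S = {\<theta>. \<forall>d. \<theta> $ d \<in> S d}"

definition axis_admissible ::
  "(real^'n \<Rightarrow> real^'n \<Rightarrow> real) \<Rightarrow> ('n \<Rightarrow> real set) \<Rightarrow> bool" where
  "axis_admissible \<kappa> S \<longleftrightarrow>
     (\<forall>d. \<forall>\<theta>::real^'n. \<theta> $ d = 0 \<longrightarrow>
        (\<forall>c :: real^'n \<Rightarrow> real.
           let f = (\<lambda>t::real. \<bar>\<Sum>l\<in>cart_grid S. c l * \<kappa> (\<theta> + t *\<^sub>R axis d 1) l\<bar>)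
           in (\<exists>t. f t \<noteq> 0) \<longrightarrow>
              ({t. \<forall>s. f s \<le> f t} \<noteq> {} \<and> {t. \<forall>s. f s \<le> f t} \<subseteq> S d)))"

definition kappa_p :: "real \<Rightarrow> real^'n \<Rightarrow> real^'n \<Rightarrow> real" where
  "kappa_p p \<theta> \<theta>' = 1 / (1 + pnorm_pow p (\<theta> - \<theta>'))"

end

theory Submission
  imports Defs
begin

text \<open>Take \<open>\<Delta> = 1\<close>, the base point \<open>\<theta> = (0,1)\<close> and the coefficients \<open>1\<close> at \<open>(0,0)\<close>,
  \<open>-1/2\<close> at \<open>(0,1)\<close> and \<open>0\<close> elsewhere. Along the first axis this gives
  \<open>f t = u / ((2 + u) (2 + 2u))\<close> with \<open>u = |t|\<^sup>p\<close>: an even function, vanishing only at \<open>0\<close>.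
  The set of maximisers of an even function is symmetric, so it cannot be a nonempty subset
  of \<open>{0, 1}\<close> unless it is \<open>{0}\<close>, which would force \<open>f \<equiv> 0\<close>.\<close>

lemma cart_grid_eq_image_PiE: "cart_grid S = vec_lambda ` (\<Pi>\<^sub>E d\<in>UNIV. S d)"
proof (intro equalityI subsetI)
  fix x assume "x \<in> cart_grid S"
  then have "(\<lambda>d. x $ d) \<in> (\<Pi>\<^sub>E d\<in>UNIV. S d)" by (simp add: cart_grid_def PiE_iff)
  then show "x \<in> vec_lambda ` (\<Pi>\<^sub>E d\<in>UNIV. S d)" by (intro image_eqI[of _ _ "\<lambda>d. x $ d"]) simp_all
qed (auto simp: cart_grid_def)

lemma finite_cart_grid: "(\<And>d. finite (S d)) \<Longrightarrow> finite (cart_grid S)"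
  unfolding cart_grid_eq_image_PiE by (simp add: finite_PiE)

lemma kappa_p_real2:
  "kappa_p p x y = 1 / (1 + \<bar>x $ 1 - y $ 1\<bar> powr p + \<bar>x $ 2 - y $ 2\<bar> powr p)"
  for x y :: "real^2"
  by (simp add: kappa_p_def pnorm_pow_def sum_2 add.assoc)

lemma even_argmax_not_subset_two_points:
  fixes f :: "real \<Rightarrow> real"
  assumes even: "\<And>t. f (- t) = f t" and not_max_at_0: "f 0 < f a" and "\<Delta> \<noteq> 0"
  shows "\<not> ({t. \<forall>s. f s \<le> f t} \<noteq> {} \<and> {t. \<forall>s. f s \<le> f t} \<subseteq> {0, \<Delta>})"
proof
  assume "{t. \<forall>s. f s \<le> f t} \<noteq> {} \<and> {t. \<forall>s. f s \<le> f t} \<subseteq> {0, \<Delta>}"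
  then obtain t where max: "\<forall>s. f s \<le> f t" and "t \<in> {0, \<Delta>}"
    and sub: "{t. \<forall>s. f s \<le> f t} \<subseteq> {0, \<Delta>}" by blast
  have "f a \<le> f t" using max by blast
  then have "t \<noteq> 0" using not_max_at_0 by auto
  then have "t = \<Delta>" using \<open>t \<in> {0, \<Delta>}\<close> by simp
  have "- \<Delta> \<in> {t. \<forall>s. f s \<le> f t}" using max even \<open>t = \<Delta>\<close> by simp
  with sub \<open>\<Delta> \<noteq> 0\<close> show False by auto
qed

theorem mainTheorem17:
  fixes p :: real
  assumes "0 < p" and "p \<le> 1"
  shows "\<exists>\<Delta>>0. \<not> axis_admissible (kappa_p p :: real^2 \<Rightarrow> real^2 \<Rightarrow> real) (\<lambda>_. {0, \<Delta>})"
proof (intro exI[of _ 1] conjI notI)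
  assume adm: "axis_admissible (kappa_p p :: real^2 \<Rightarrow> real^2 \<Rightarrow> real) (\<lambda>_. {0, 1})"
  define G where "G = cart_grid (\<lambda>_::2. {0, 1::real})"
  define \<theta> :: "real^2" where "\<theta> = axis 2 1"
  define c :: "real^2 \<Rightarrow> real" where "c l = (if l = 0 then 1 else if l = \<theta> then -1/2 else 0)" for l
  define f where "f t = \<bar>\<Sum>l\<in>G. c l * kappa_p p (\<theta> + t *\<^sub>R axis 1 1) l\<bar>" for t
  have sum_G: "(\<Sum>l\<in>G. c l * g l) = g 0 - g \<theta> / 2" for g :: "real^2 \<Rightarrow> real"
  proof -
    have "{0, \<theta>} \<subseteq> G" by (auto simp: G_def \<theta>_def cart_grid_def axis_def)
    moreover have "finite G" unfolding G_def by (rule finite_cart_grid) simp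
    ultimately have "(\<Sum>l\<in>G. c l * g l) = (\<Sum>l\<in>{0, \<theta>}. c l * g l)"
      by (intro sum.mono_neutral_right) (auto simp: c_def)
    moreover have "\<theta> \<noteq> 0" by (simp add: \<theta>_def vec_eq_iff axis_def)
    ultimately show ?thesis by (simp add: c_def)
  qed
  have f_eq: "f t = \<bar>1 / (2 + \<bar>t\<bar> powr p) - 1 / (1 + \<bar>t\<bar> powr p) / 2\<bar>" for t
    unfolding f_def sum_G using \<open>0 < p\<close> by (simp add: kappa_p_real2 \<theta>_def axis_def)
  have "{t. \<forall>s. f s \<le> f t} \<noteq> {} \<and> {t. \<forall>s. f s \<le> f t} \<subseteq> {0, 1}"
  proof -
    have "\<theta> $ 1 = 0" by (simp add: \<theta>_def axis_def)
    moreover have "f 1 \<noteq> 0" by (simp add: f_eq)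
    ultimately show ?thesis
      using adm unfolding axis_admissible_def Let_def f_def G_def by blast
  qed
  moreover have "\<not> ({t. \<forall>s. f s \<le> f t} \<noteq> {} \<and> {t. \<forall>s. f s \<le> f t} \<subseteq> {0, 1})"
    by (rule even_argmax_not_subset_two_points[where a = 1]) (use \<open>0 < p\<close> in \<open>simp_all add: f_eq\<close>)
  ultimately show False by contradiction
qed simp

end
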